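(* There is a polynomial $p$ such that for all $\varepsilon,\eta\in(0,1]$, every finite nonempty set system $\mathcal{F}$ on a finite ground set $V$ has an $(\varepsilon,\eta)$-clustering with at most $2^{p(1/\varepsilon,1/\eta)}$ clusters.
   Context: Let $\mathcal{F}$ be a finite family of subsets of a finite set $V$. For $x\in V$, $\mathcal{F}_x$ is the set of members of $\mathcal{F}$ containing $x$, and $\mathcal{F}_{xy}=\mathcal{F}_x\cap\mathcal{F}_y$. For $\varepsilon\geq0$, $D_\varepsilon(x)=\{y\in V:|\mathcal{F}_{xy}|\leq\varepsilon|\mathcal{F}|\}$ and $D(x)=D_0(x)$. An $(\varepsilon,\eta)$-cluster is a set $X\subseteq V$ with $|D(x)\setminus D_\varepsilon(y)|\leq\eta|V|$ for all $x,y\in X$; an $(\varepsilon,\eta)$-clustering is a partition of $V$ into $(\varepsilon,\eta)$-clusters, and its size is the number of parts. *)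

theory Defs
  imports Complex_Main "HOL-Library.Disjoint_Sets"
begin

definition fam_x :: "'a set set \<Rightarrow> 'a \<Rightarrow> 'a set set" where
  "fam_x F x = {A \<in> F. x \<in> A}"

definition fam_xy :: "'a set set \<Rightarrow> 'a \<Rightarrow> 'a \<Rightarrow> 'a set set" where
  "fam_xy F x y = fam_x F x \<inter> fam_x F y"

definition Deps :: "'a set \<Rightarrow> 'a set set \<Rightarrow> real \<Rightarrow> 'a \<Rightarrow> 'a set" where
  "Deps V F \<epsilon> x = {y \<in> V. real (card (fam_xy F x y)) \<le> \<epsilon> * real (card F)}"

definition is_cluster :: "'a set \<Rightarrow> 'a set set \<Rightarrow> real \<Rightarrow> real \<Rightarrow> 'a set \<Rightarrow> bool" where
  "is_cluster V F \<epsilon> \<eta> X \<longleftrightarrow> X \<subseteq> V \<and>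
     (\<forall>x\<in>X. \<forall>y\<in>X. real (card (Deps V F 0 x - Deps V F \<epsilon> y)) \<le> \<eta> * real (card V))"

definition is_clustering :: "'a set \<Rightarrow> 'a set set \<Rightarrow> real \<Rightarrow> real \<Rightarrow> 'a set set \<Rightarrow> bool" where
  "is_clustering V F \<epsilon> \<eta> P \<longleftrightarrow> partition_on V P \<and> (\<forall>X\<in>P. is_cluster V F \<epsilon> \<eta> X)"

definition poly2 :: "(nat \<Rightarrow> nat \<Rightarrow> real) \<Rightarrow> nat \<Rightarrow> real \<Rightarrow> real \<Rightarrow> real" where
  "poly2 c d a b = (\<Sum>i\<le>d. \<Sum>j\<le>d. c i j * a ^ i * b ^ j)"

end

theory Submission
  imports Defs
begin

text \<open>View the incidence vectors 1_v of the vertices as elements of L^2 of the uniform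
  probability on F, so that the pairing of 1_x and 1_y is |F_xy| / |F|. Greedily pick orthonormal
  directions u_1, ..., u_k each of energy sum_z (u_i, 1_z)^2 > delta |V| with delta = eps^2 eta / 18;
  Bessel's inequality gives k <= 1/delta, and when no direction can be added, the residual of every
  1_v has energy at most delta |V|. Group the vertices by their coefficients (1_v, u_i) rounded to a
  grid of mesh about eps / (3k); this gives at most 2^(poly(1/eps, 1/eta)) groups. Within a group the
  projections of 1_x and 1_y pair with each 1_z up to eps/3, while the full pairings differ by more
  than eps for z in D(x) - D_eps(y). Hence one of the two residuals pairs with 1_z by more than eps/3,
  and a Markov bound on the residual energies leaves at most eta |V| such z.\<close>

definition avg_inner :: "'b set \<Rightarrow> ('b \<Rightarrow> real) \<Rightarrow> ('b \<Rightarrow> real) \<Rightarrow> real" where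
  "avg_inner F u w = (\<Sum>A\<in>F. u A * w A) / real (card F)"

lemma avg_inner_commute: "avg_inner F u w = avg_inner F w u"
  unfolding avg_inner_def by (simp add: mult.commute)

lemma avg_inner_self_nonneg: "avg_inner F w w \<ge> 0"
  unfolding avg_inner_def by (intro divide_nonneg_nonneg sum_nonneg) auto

lemma avg_inner_eq_0_if_self_eq_0:
  assumes "finite F" "avg_inner F w w = 0"
  shows "avg_inner F w z = 0"
proof (cases "card F = 0")
  case False
  hence "(\<Sum>A\<in>F. w A * w A) = 0" using assms(2) by (simp add: avg_inner_def)
  hence "\<forall>A\<in>F. w A * w A = 0" using assms(1) by (subst (asm) sum_nonneg_eq_0_iff) auto
  thus ?thesis by (simp add: avg_inner_def)
qed (simp add: avg_inner_def)

lemma avg_inner_diff_left: "avg_inner F (\<lambda>A. u A - w A) z = avg_inner F u z - avg_inner F w z"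
  unfolding avg_inner_def by (simp add: left_diff_distrib sum_subtractf diff_divide_distrib)

lemma avg_inner_divide_left: "avg_inner F (\<lambda>A. u A / c) z = avg_inner F u z / c"
  unfolding avg_inner_def by (simp add: sum_divide_distrib[symmetric] field_simps)

lemma avg_inner_sum_left:
  "avg_inner F (\<lambda>A. \<Sum>i\<in>I. g i * u i A) z = (\<Sum>i\<in>I. g i * avg_inner F (u i) z)"
proof -
  have "(\<Sum>A\<in>F. (\<Sum>i\<in>I. g i * u i A) * z A) = (\<Sum>i\<in>I. g i * (\<Sum>A\<in>F. u i A * z A))"
    by (simp add: sum_distrib_right sum_distrib_left mult.assoc sum.swap[of _ F])
  thus ?thesis unfolding avg_inner_def by (simp add: sum_divide_distrib[symmetric])
qed

definition orthonormal_system :: "'b set \<Rightarrow> nat \<Rightarrow> (nat \<Rightarrow> 'b \<Rightarrow> real) \<Rightarrow> bool" where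
  "orthonormal_system F k u \<longleftrightarrow>
     (\<forall>i<k. \<forall>j<k. avg_inner F (u i) (u j) = (if i = j then 1 else 0))"

definition residual :: "'b set \<Rightarrow> nat \<Rightarrow> (nat \<Rightarrow> 'b \<Rightarrow> real) \<Rightarrow> ('b \<Rightarrow> real) \<Rightarrow> 'b \<Rightarrow> real" where
  "residual F k u w = (\<lambda>A. w A - (\<Sum>i<k. avg_inner F w (u i) * u i A))"

lemma avg_inner_residual_decomp:
  "avg_inner F w z = avg_inner F (residual F k u w) z + (\<Sum>i<k. avg_inner F w (u i) * avg_inner F (u i) z)"
  unfolding residual_def by (simp add: avg_inner_diff_left avg_inner_sum_left)

lemma avg_inner_residual_orthogonal:
  assumes "orthonormal_system F k u" "j < k"
  shows "avg_inner F (residual F k u w) (u j) = 0"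
proof -
  have "(\<Sum>i<k. avg_inner F w (u i) * avg_inner F (u i) (u j))
        = (\<Sum>i<k. if i = j then avg_inner F w (u j) else 0)"
    using assms by (intro sum.cong) (auto simp: orthonormal_system_def)
  also have "\<dots> = avg_inner F w (u j)" using assms(2) by simp
  finally show ?thesis using avg_inner_residual_decomp[of F w "u j" k u] by simp
qed

lemma avg_inner_self_residual:
  assumes "orthonormal_system F k u"
  shows "avg_inner F (residual F k u w) (residual F k u w) = avg_inner F w w - (\<Sum>i<k. (avg_inner F w (u i))\<^sup>2)"
proof -
  let ?r = "residual F k u w"
  have "avg_inner F ?r ?r = avg_inner F w ?r - (\<Sum>i<k. avg_inner F w (u i) * avg_inner F (u i) ?r)"
    by (subst (1) residual_def) (simp add: avg_inner_diff_left avg_inner_sum_left)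
  also have "(\<Sum>i<k. avg_inner F w (u i) * avg_inner F (u i) ?r) = 0"
    using avg_inner_residual_orthogonal[OF assms] by (simp add: avg_inner_commute)
  also have "avg_inner F w ?r = avg_inner F w w - (\<Sum>i<k. (avg_inner F w (u i))\<^sup>2)"
    by (subst avg_inner_commute, subst (1) residual_def)
      (simp add: avg_inner_diff_left avg_inner_sum_left power2_eq_square avg_inner_commute)
  finally show ?thesis by simp
qed

lemma bessel_inequality:
  assumes "orthonormal_system F k u"
  shows "(\<Sum>i<k. (avg_inner F w (u i))\<^sup>2) \<le> avg_inner F w w"
  using avg_inner_self_residual[OF assms, of w] avg_inner_self_nonneg[of F "residual F k u w"] by simp

lemma abs_avg_inner_orthonormal_le:
  assumes "orthonormal_system F k u" "i < k"
  shows "\<bar>avg_inner F w (u i)\<bar> \<le> sqrt (avg_inner F w w)"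
proof -
  have "(avg_inner F w (u i))\<^sup>2 \<le> (\<Sum>i<k. (avg_inner F w (u i))\<^sup>2)"
    using assms(2) by (intro member_le_sum) auto
  also have "\<dots> \<le> avg_inner F w w" by (rule bessel_inequality[OF assms(1)])
  finally show ?thesis by (simp add: real_le_rsqrt)
qed

lemma orthonormal_system_extend:
  assumes "orthonormal_system F k u" "avg_inner F r r > 0"
    and "\<And>j. j < k \<Longrightarrow> avg_inner F r (u j) = 0"
  shows "orthonormal_system F (Suc k) (u(k := (\<lambda>A. r A / sqrt (avg_inner F r r))))"
proof -
  let ?s = "sqrt (avg_inner F r r)"
  let ?w = "\<lambda>A. r A / ?s"
  have "avg_inner F ?w ?w = avg_inner F r ?w / ?s" by (rule avg_inner_divide_left)
  also have "avg_inner F r ?w = avg_inner F ?w r" by (rule avg_inner_commute)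
  also have "\<dots> = avg_inner F r r / ?s" by (rule avg_inner_divide_left)
  finally have norm: "avg_inner F ?w ?w = 1" using assms(2) by simp
  have orth: "avg_inner F ?w (u j) = 0" "avg_inner F (u j) ?w = 0" if "j < k" for j
    using assms(3)[OF that] avg_inner_commute[of F "u j" ?w] avg_inner_divide_left[of F r ?s "u j"]
    by simp_all
  show ?thesis unfolding orthonormal_system_def
  proof (intro allI impI)
    fix i j assume "i < Suc k" "j < Suc k"
    then consider "i = k" "j = k" | "i = k" "j < k" | "i < k" "j = k" | "i < k" "j < k"
      by (auto simp: less_Suc_eq)
    then show "avg_inner F ((u(k := ?w)) i) ((u(k := ?w)) j) = (if i = j then 1 else 0)"
    proof cases
      case 4
      then show ?thesis using assms(1) by (simp add: orthonormal_system_def)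
    qed (simp_all add: norm orth)
  qed
qed

definition incidence :: "'a \<Rightarrow> 'a set \<Rightarrow> real" where
  "incidence v = (\<lambda>A. if v \<in> A then 1 else 0)"

definition energy :: "'a set set \<Rightarrow> 'a set \<Rightarrow> ('a set \<Rightarrow> real) \<Rightarrow> real" where
  "energy F V w = (\<Sum>z\<in>V. (avg_inner F w (incidence z))\<^sup>2)"

lemma avg_inner_incidence:
  assumes "finite F"
  shows "avg_inner F (incidence x) (incidence z) = real (card (fam_xy F x z)) / real (card F)"
proof -
  have "(\<Sum>A\<in>F. incidence x A * incidence z A) = (\<Sum>A\<in>F. if x \<in> A \<and> z \<in> A then 1 else 0)"
    by (intro sum.cong) (auto simp: incidence_def)
  also have "\<dots> = real (card {A\<in>F. x \<in> A \<and> z \<in> A})"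
    using assms by (simp add: sum.inter_filter[symmetric])
  also have "{A\<in>F. x \<in> A \<and> z \<in> A} = fam_xy F x z"
    by (auto simp: fam_xy_def fam_x_def)
  finally show ?thesis by (simp add: avg_inner_def)
qed

lemma avg_inner_incidence_self_le_1:
  assumes "finite F"
  shows "avg_inner F (incidence z) (incidence z) \<le> 1"
proof -
  have "card (fam_xy F z z) \<le> card F"
    using assms by (intro card_mono) (auto simp: fam_xy_def fam_x_def)
  thus ?thesis
    by (cases "card F = 0") (simp_all add: avg_inner_incidence[OF assms] divide_le_eq_1)
qed

lemma abs_avg_inner_incidence_orthonormal_le_1:
  assumes "finite F" "orthonormal_system F k u" "i < k"
  shows "\<bar>avg_inner F (incidence v) (u i)\<bar> \<le> 1"
  using abs_avg_inner_orthonormal_le[OF assms(2,3), of "incidence v"]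
    avg_inner_incidence_self_le_1[OF assms(1), of v] by (meson order.trans real_sqrt_le_1_iff)

lemma energy_divide: "energy F V (\<lambda>A. w A / c) = energy F V w / c\<^sup>2"
  by (simp add: energy_def avg_inner_divide_left power_divide sum_divide_distrib)

lemma energy_nonneg: "energy F V w \<ge> 0"
  by (simp add: energy_def sum_nonneg)

lemma card_energetic_orthonormal_le:
  assumes "finite F" "finite V" "orthonormal_system F k u"
    and energetic: "\<And>i. i < k \<Longrightarrow> \<delta> * real (card V) < energy F V (u i)"
  shows "real k * \<delta> \<le> 1"
proof -
  have "real k * (\<delta> * real (card V)) = (\<Sum>i<k. \<delta> * real (card V))" by simp
  also have "\<dots> \<le> (\<Sum>i<k. energy F V (u i))"
    using energetic by (intro sum_mono) (simp add: less_imp_le)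
  also have "\<dots> = (\<Sum>z\<in>V. \<Sum>i<k. (avg_inner F (incidence z) (u i))\<^sup>2)"
    unfolding energy_def by (subst sum.swap) (simp add: avg_inner_commute)
  also have "\<dots> \<le> (\<Sum>z\<in>V. 1)"
    by (intro sum_mono order.trans[OF bessel_inequality[OF assms(3)]]
        avg_inner_incidence_self_le_1[OF assms(1)])
  finally have *: "real k * \<delta> * real (card V) \<le> real (card V)" by (simp add: mult.assoc)
  show ?thesis
  proof (cases "k = 0")
    case False
    hence "V \<noteq> {}" using energetic[of 0] by (auto simp: energy_def)
    hence "card V \<noteq> 0" using assms(2) by simp
    thus ?thesis using * by simp
  qed simp
qed

lemma energetic_residual_extends:
  assumes "finite F" "orthonormal_system F k u" "0 \<le> \<delta>"
    and energetic: "\<delta> * real (card V) < energy F V (residual F k u (incidence v))"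
  shows "\<exists>w. orthonormal_system F (Suc k) (u(k := w)) \<and> \<delta> * real (card V) < energy F V w"
proof -
  define r where "r = residual F k u (incidence v)"
  have r_pos: "avg_inner F r r > 0"
  proof (rule ccontr)
    assume "\<not> avg_inner F r r > 0"
    hence "avg_inner F r r = 0" using avg_inner_self_nonneg[of F r] by simp
    hence "energy F V r = 0"
      using avg_inner_eq_0_if_self_eq_0[OF assms(1)] by (simp add: energy_def)
    moreover have "0 \<le> \<delta> * real (card V)" using assms(3) by simp
    ultimately show False using energetic unfolding r_def by linarith
  qed
  have r_le: "avg_inner F r r \<le> 1"
    using avg_inner_self_residual[OF assms(2), of "incidence v"]
      avg_inner_incidence_self_le_1[OF assms(1), of v]
      sum_nonneg[of "{..<k}" "\<lambda>i. (avg_inner F (incidence v) (u i))\<^sup>2"]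
    by (simp add: r_def)
  let ?w = "\<lambda>A. r A / sqrt (avg_inner F r r)"
  have "energy F V r \<le> energy F V r / avg_inner F r r"
    using r_pos r_le energy_nonneg[of F V r] by (simp add: le_divide_eq mult_left_le)
  also have "\<dots> = energy F V ?w" using r_pos by (simp add: energy_divide)
  finally have "\<delta> * real (card V) < energy F V ?w" using energetic unfolding r_def by linarith
  moreover have "orthonormal_system F (Suc k) (u(k := ?w))"
    using orthonormal_system_extend[OF assms(2) r_pos] avg_inner_residual_orthogonal[OF assms(2)]
    unfolding r_def by blast
  ultimately show ?thesis by blast
qed

lemma exists_orthonormal_small_residuals:
  assumes F: "finite F" and V: "finite V" and \<delta>: "0 < \<delta>"
  shows "\<exists>k u. orthonormal_system F k u \<and> real k * \<delta> \<le> 1 \<and>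
     (\<forall>v\<in>V. energy F V (residual F k u (incidence v)) \<le> \<delta> * real (card V))"
proof -
  define S where "S = {k. \<exists>u. orthonormal_system F k u \<and>
                            (\<forall>i<k. \<delta> * real (card V) < energy F V (u i))}"
  have S_bound: "real k * \<delta> \<le> 1" if "k \<in> S" for k
    using that card_energetic_orthonormal_le[OF F V] unfolding S_def by blast
  have "S \<subseteq> {..nat \<lceil>1 / \<delta>\<rceil>}"
  proof
    fix k assume "k \<in> S"
    hence "real k \<le> 1 / \<delta>" using S_bound \<delta> by (simp add: field_simps)
    thus "k \<in> {..nat \<lceil>1 / \<delta>\<rceil>}" by (simp add: le_nat_iff le_ceiling_iff)
  qed
  hence "finite S" by (rule finite_subset) simp
  moreover have "0 \<in> S" by (auto simp: S_def orthonormal_system_def)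
  ultimately have k_S: "Max S \<in> S" and k_max: "\<And>k. k \<in> S \<Longrightarrow> k \<le> Max S"
    by (auto intro: Max_in)
  then obtain u where u: "orthonormal_system F (Max S) u"
    and u_energetic: "\<And>i. i < Max S \<Longrightarrow> \<delta> * real (card V) < energy F V (u i)"
    unfolding S_def by blast
  have "energy F V (residual F (Max S) u (incidence v)) \<le> \<delta> * real (card V)" if "v \<in> V" for v
  proof (rule ccontr)
    assume "\<not> ?thesis"
    then obtain w where "orthonormal_system F (Suc (Max S)) (u(Max S := w))"
      and "\<delta> * real (card V) < energy F V w"
      using energetic_residual_extends[OF F u] \<delta> by (meson less_imp_le not_le)
    hence "Suc (Max S) \<in> S" using u_energetic unfolding S_def by (auto simp: less_Suc_eq)
    thus False using k_max by fastforce
  qed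
  thus ?thesis using u S_bound[OF k_S] by blast
qed

lemma card_large_le_sum_squares:
  assumes "finite V" "0 \<le> \<theta>"
  shows "real (card {z\<in>V. \<theta> < \<bar>t z\<bar>}) * \<theta>\<^sup>2 \<le> (\<Sum>z\<in>V. (t z)\<^sup>2)"
proof -
  have "real (card {z\<in>V. \<theta> < \<bar>t z\<bar>}) * \<theta>\<^sup>2 = (\<Sum>z\<in>{z\<in>V. \<theta> < \<bar>t z\<bar>}. \<theta>\<^sup>2)" by simp
  also have "\<dots> \<le> (\<Sum>z\<in>{z\<in>V. \<theta> < \<bar>t z\<bar>}. (t z)\<^sup>2)"
    using assms(2) by (intro sum_mono) (simp add: abs_le_square_iff[symmetric])
  also have "\<dots> \<le> (\<Sum>z\<in>V. (t z)\<^sup>2)" using assms(1) by (intro sum_mono2) auto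
  finally show ?thesis .
qed

lemma Deps_diff_subset_large_residual_pairings:
  assumes F: "finite F" "F \<noteq> {}" and u: "orthonormal_system F k u"
    and close: "(\<Sum>i<k. \<bar>avg_inner F (incidence x) (u i) - avg_inner F (incidence y) (u i)\<bar>) \<le> \<epsilon> / 3"
  shows "Deps V F 0 x - Deps V F \<epsilon> y \<subseteq>
           {z\<in>V. \<epsilon> / 3 < \<bar>avg_inner F (residual F k u (incidence x)) (incidence z)\<bar>} \<union>
           {z\<in>V. \<epsilon> / 3 < \<bar>avg_inner F (residual F k u (incidence y)) (incidence z)\<bar>}"
proof
  fix z assume z: "z \<in> Deps V F 0 x - Deps V F \<epsilon> y"
  have card_F: "real (card F) > 0" using F by (simp add: card_gt_0_iff)
  have x_z: "avg_inner F (incidence x) (incidence z) = 0"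
    using z by (simp add: Deps_def avg_inner_incidence[OF F(1)])
  have "\<epsilon> * real (card F) < real (card (fam_xy F y z))" using z by (auto simp: Deps_def)
  hence y_z: "avg_inner F (incidence y) (incidence z) > \<epsilon>"
    using card_F by (simp add: avg_inner_incidence[OF F(1)] field_simps)
  define c where "c w i = avg_inner F (incidence w) (u i)" for w i
  have "\<bar>(\<Sum>i<k. c y i * avg_inner F (u i) (incidence z)) - (\<Sum>i<k. c x i * avg_inner F (u i) (incidence z))\<bar>
        = \<bar>\<Sum>i<k. (c y i - c x i) * avg_inner F (u i) (incidence z)\<bar>"
    by (simp add: sum_subtractf left_diff_distrib)
  also have "\<dots> \<le> (\<Sum>i<k. \<bar>c x i - c y i\<bar> * \<bar>avg_inner F (u i) (incidence z)\<bar>)"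
    by (rule order.trans[OF sum_abs]) (simp add: abs_mult abs_minus_commute)
  also have "\<dots> \<le> (\<Sum>i<k. \<bar>c x i - c y i\<bar>)"
    using abs_avg_inner_incidence_orthonormal_le_1[OF F(1) u]
    by (intro sum_mono) (simp add: avg_inner_commute mult_left_le)
  finally have "\<bar>(\<Sum>i<k. c y i * avg_inner F (u i) (incidence z)) -
                 (\<Sum>i<k. c x i * avg_inner F (u i) (incidence z))\<bar> \<le> \<epsilon> / 3"
    using close unfolding c_def by linarith
  hence "\<epsilon> / 3 < \<bar>avg_inner F (residual F k u (incidence x)) (incidence z)\<bar> \<or>
         \<epsilon> / 3 < \<bar>avg_inner F (residual F k u (incidence y)) (incidence z)\<bar>"
    using x_z y_z avg_inner_residual_decomp[of F "incidence x" "incidence z" k u]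
      avg_inner_residual_decomp[of F "incidence y" "incidence z" k u]
    unfolding c_def by linarith
  thus "z \<in> {z\<in>V. \<epsilon> / 3 < \<bar>avg_inner F (residual F k u (incidence x)) (incidence z)\<bar>} \<union>
            {z\<in>V. \<epsilon> / 3 < \<bar>avg_inner F (residual F k u (incidence y)) (incidence z)\<bar>}"
    using z by (auto simp: Deps_def)
qed

lemma is_cluster_if_coefficients_close:
  assumes V: "finite V" and F: "finite F" "F \<noteq> {}" and u: "orthonormal_system F k u"
    and \<epsilon>: "0 < \<epsilon>" and X: "X \<subseteq> V"
    and small: "\<And>v. v \<in> X \<Longrightarrow>
                 energy F V (residual F k u (incidence v)) \<le> \<epsilon>\<^sup>2 * \<eta> / 18 * real (card V)"
    and close: "\<And>x y. x \<in> X \<Longrightarrow> y \<in> X \<Longrightarrow>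
       (\<Sum>i<k. \<bar>avg_inner F (incidence x) (u i) - avg_inner F (incidence y) (u i)\<bar>) \<le> \<epsilon> / 3"
  shows "is_cluster V F \<epsilon> \<eta> X"
proof -
  define L where "L v = {z\<in>V. \<epsilon> / 3 < \<bar>avg_inner F (residual F k u (incidence v)) (incidence z)\<bar>}"
    for v
  have card_L: "real (card (L v)) \<le> \<eta> * real (card V) / 2" if "v \<in> X" for v
  proof -
    have "real (card (L v)) * (\<epsilon> / 3)\<^sup>2 \<le> energy F V (residual F k u (incidence v))"
      unfolding L_def energy_def using \<epsilon> by (intro card_large_le_sum_squares V) simp
    also have "\<dots> \<le> (\<eta> * real (card V) / 2) * (\<epsilon> / 3)\<^sup>2"
      using small[OF that] by (simp add: power2_eq_square algebra_simps)
    finally show ?thesis using \<epsilon> by simp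
  qed
  have "real (card (Deps V F 0 x - Deps V F \<epsilon> y)) \<le> \<eta> * real (card V)"
    if "x \<in> X" "y \<in> X" for x y
  proof -
    have "card (Deps V F 0 x - Deps V F \<epsilon> y) \<le> card (L x \<union> L y)"
      using Deps_diff_subset_large_residual_pairings[OF F u close[OF that]] V
      unfolding L_def by (intro card_mono) auto
    also have "\<dots> \<le> card (L x) + card (L y)" by (rule card_Un_le)
    finally show ?thesis using card_L[OF that(1)] card_L[OF that(2)] by linarith
  qed
  thus ?thesis using X by (simp add: is_cluster_def)
qed

lemma sum_abs_diff_le_if_floor_eq:
  fixes f g :: "nat \<Rightarrow> real"
  assumes "0 < m" and "\<And>i. i < k \<Longrightarrow> \<lfloor>m * f i\<rfloor> = \<lfloor>m * g i\<rfloor>"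
  shows "(\<Sum>i<k. \<bar>f i - g i\<bar>) \<le> real k / m"
proof -
  have "\<bar>f i - g i\<bar> \<le> 1 / m" if "i < k" for i
  proof -
    have "\<bar>m * f i - m * g i\<bar> < 1" using assms(2)[OF that] by linarith
    also have "\<bar>m * f i - m * g i\<bar> = m * \<bar>f i - g i\<bar>"
      using assms(1) by (simp add: abs_mult flip: right_diff_distrib)
    finally show ?thesis using assms(1) by (simp add: le_divide_eq mult.commute)
  qed
  hence "(\<Sum>i<k. \<bar>f i - g i\<bar>) \<le> (\<Sum>i<k. 1 / m)" by (intro sum_mono) simp
  thus ?thesis by simp
qed

lemma partition_on_fibres: "partition_on V ((\<lambda>\<kappa>. {v\<in>V. f v = \<kappa>}) ` f ` V)"
  by (rule partition_onI) (auto simp: disjnt_def)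

lemma card_rounded_vectors_le:
  assumes "finite V" and bounded: "\<And>v i. v \<in> V \<Longrightarrow> i < k \<Longrightarrow> \<bar>f v i\<bar> \<le> 1"
  shows "card ((\<lambda>v. map (\<lambda>i. \<lfloor>real m * f v i\<rfloor>) [0..<k]) ` V) \<le> (2 * m + 1) ^ k"
proof -
  have "\<lfloor>real m * f v i\<rfloor> \<in> {- int m..int m}" if "v \<in> V" "i < k" for v i
  proof -
    have "\<bar>real m * f v i\<bar> \<le> real m" using bounded[OF that] by (simp add: abs_mult mult_left_le)
    hence "- real m \<le> real m * f v i" "real m * f v i \<le> real m" by linarith+
    hence "- int m \<le> \<lfloor>real m * f v i\<rfloor>" "\<lfloor>real m * f v i\<rfloor> \<le> int m"
      by (simp_all add: le_floor_iff floor_le_iff)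
    thus ?thesis by simp
  qed
  hence "(\<lambda>v. map (\<lambda>i. \<lfloor>real m * f v i\<rfloor>) [0..<k]) ` V \<subseteq>
          {xs. set xs \<subseteq> {- int m..int m} \<and> length xs = k}"
    by auto
  hence "card ((\<lambda>v. map (\<lambda>i. \<lfloor>real m * f v i\<rfloor>) [0..<k]) ` V) \<le>
           card {xs. set xs \<subseteq> {- int m..int m} \<and> length xs = k}"
    by (intro card_mono finite_lists_length_eq) simp_all
  also have "\<dots> = (2 * m + 1) ^ k" by (simp add: card_lists_length_eq nat_add_distrib nat_mult_distrib)
  finally show ?thesis .
qed

lemma rounded_fibres_is_clustering:
  assumes V: "finite V" and F: "finite F" "F \<noteq> {}" and u: "orthonormal_system F k u"
    and \<epsilon>: "0 < \<epsilon>" and m: "0 < m" "real k / m \<le> \<epsilon> / 3"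
    and small: "\<And>v. v \<in> V \<Longrightarrow>
                 energy F V (residual F k u (incidence v)) \<le> \<epsilon>\<^sup>2 * \<eta> / 18 * real (card V)"
  defines "key \<equiv> \<lambda>v. map (\<lambda>i. \<lfloor>m * avg_inner F (incidence v) (u i)\<rfloor>) [0..<k]"
  shows "is_clustering V F \<epsilon> \<eta> ((\<lambda>\<kappa>. {v\<in>V. key v = \<kappa>}) ` key ` V)"
  unfolding is_clustering_def
proof (intro conjI partition_on_fibres ballI)
  fix X assume "X \<in> (\<lambda>\<kappa>. {v\<in>V. key v = \<kappa>}) ` key ` V"
  then obtain \<kappa> where X: "X = {v\<in>V. key v = \<kappa>}" by blast
  show "is_cluster V F \<epsilon> \<eta> X"
  proof (rule is_cluster_if_coefficients_close[OF V F u \<epsilon>])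
    fix x y assume "x \<in> X" "y \<in> X"
    hence "key x = key y" using X by simp
    hence "\<lfloor>m * avg_inner F (incidence x) (u i)\<rfloor> = \<lfloor>m * avg_inner F (incidence y) (u i)\<rfloor>"
      if "i < k" for i
      using arg_cong[where f = "\<lambda>l. l ! i"] that by (simp add: key_def)
    thus "(\<Sum>i<k. \<bar>avg_inner F (incidence x) (u i) - avg_inner F (incidence y) (u i)\<bar>) \<le> \<epsilon> / 3"
      using sum_abs_diff_le_if_floor_eq[OF m(1)] m(2) by (meson order.trans)
  qed (use X small in auto)
qed

lemma exists_clustering_card_le:
  assumes \<epsilon>: "0 < \<epsilon>" and \<eta>: "0 < \<eta>"
    and V: "finite V" and FV: "F \<subseteq> Pow V" and F_ne: "F \<noteq> {}"
  shows "\<exists>P. is_clustering V F \<epsilon> \<eta> P \<and>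
             card P \<le> (2 * nat \<lceil>54 / (\<epsilon> ^ 3 * \<eta>)\<rceil> + 1) ^ nat \<lfloor>18 / (\<epsilon>\<^sup>2 * \<eta>)\<rfloor>"
proof -
  have F: "finite F" using finite_subset[OF FV] V by simp
  have "0 < \<epsilon>\<^sup>2 * \<eta> / 18" using \<epsilon> \<eta> by simp
  then obtain k u where u: "orthonormal_system F k u" and k: "real k * (\<epsilon>\<^sup>2 * \<eta> / 18) \<le> 1"
    and small: "\<And>v. v \<in> V \<Longrightarrow>
                  energy F V (residual F k u (incidence v)) \<le> \<epsilon>\<^sup>2 * \<eta> / 18 * real (card V)"
    using exists_orthonormal_small_residuals[OF F V] by blast
  define K where "K = nat \<lfloor>18 / (\<epsilon>\<^sup>2 * \<eta>)\<rfloor>"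
  define m where "m = nat \<lceil>54 / (\<epsilon> ^ 3 * \<eta>)\<rceil>"
  have k_le: "real k \<le> 18 / (\<epsilon>\<^sup>2 * \<eta>)" using k \<epsilon> \<eta> by (simp add: field_simps)
  hence "k \<le> K" unfolding K_def by (simp add: le_nat_floor)
  have m_ge: "54 / (\<epsilon> ^ 3 * \<eta>) \<le> real m" unfolding m_def by linarith
  moreover have "0 < 54 / (\<epsilon> ^ 3 * \<eta>)" using \<epsilon> \<eta> by simp
  ultimately have m_pos: "0 < real m" by linarith
  have "3 * real k \<le> \<epsilon> * (54 / (\<epsilon> ^ 3 * \<eta>))"
    using k_le \<epsilon> by (simp add: power2_eq_square power3_eq_cube field_simps)
  also have "\<dots> \<le> \<epsilon> * real m" using m_ge \<epsilon> by (intro mult_left_mono) simp_all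
  finally have k_m: "real k / real m \<le> \<epsilon> / 3" using m_pos by (simp add: field_simps)
  define key where "key v = map (\<lambda>i. \<lfloor>real m * avg_inner F (incidence v) (u i)\<rfloor>) [0..<k]" for v
  define P where "P = (\<lambda>\<kappa>. {v\<in>V. key v = \<kappa>}) ` key ` V"
  have "is_clustering V F \<epsilon> \<eta> P"
    unfolding P_def key_def by (rule rounded_fibres_is_clustering[OF V F F_ne u \<epsilon> m_pos k_m small])
  moreover have "card P \<le> (2 * m + 1) ^ K"
  proof -
    have "card P \<le> card (key ` V)" unfolding P_def using V by (intro card_image_le) simp
    also have "\<dots> \<le> (2 * m + 1) ^ k"
      unfolding key_def
      by (rule card_rounded_vectors_le[OF V, where f = "\<lambda>v i. avg_inner F (incidence v) (u i)"])
        (rule abs_avg_inner_incidence_orthonormal_le_1[OF F u])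
    also have "\<dots> \<le> (2 * m + 1) ^ K" using \<open>k \<le> K\<close> by (intro power_increasing) simp_all
    finally show ?thesis .
  qed
  ultimately show ?thesis unfolding m_def K_def by blast
qed

lemma clustering_size_le_powr:
  fixes \<epsilon> \<eta> :: real
  assumes "0 < \<epsilon>" "\<epsilon> \<le> 1" "0 < \<eta>" "\<eta> \<le> 1"
  shows "real ((2 * nat \<lceil>54 / (\<epsilon> ^ 3 * \<eta>)\<rceil> + 1) ^ nat \<lfloor>18 / (\<epsilon>\<^sup>2 * \<eta>)\<rfloor>)
           \<le> 2 powr (1998 * (1 / \<epsilon>) ^ 5 * (1 / \<eta>) ^ 2)"
proof -
  define a where "a = 1 / \<epsilon>"
  define b where "b = 1 / \<eta>"
  have "1 \<le> a" "1 \<le> b" using assms by (simp_all add: a_def b_def)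
  hence ab: "1 \<le> a ^ 3 * b" using one_le_power[of a 3] mult_mono[of 1 "a ^ 3" 1 b] by simp
  define m where "m = nat \<lceil>54 * a ^ 3 * b\<rceil>"
  define K where "K = nat \<lfloor>18 * a\<^sup>2 * b\<rfloor>"
  have "54 / (\<epsilon> ^ 3 * \<eta>) = 54 * a ^ 3 * b" "18 / (\<epsilon>\<^sup>2 * \<eta>) = 18 * a\<^sup>2 * b"
    by (simp_all add: a_def b_def power_one_over)
  hence eq: "(2 * nat \<lceil>54 / (\<epsilon> ^ 3 * \<eta>)\<rceil> + 1) ^ nat \<lfloor>18 / (\<epsilon>\<^sup>2 * \<eta>)\<rfloor> = (2 * m + 1) ^ K"
    by (simp add: m_def K_def)
  have m_le: "real m \<le> 54 * a ^ 3 * b + 1" unfolding m_def using ab by linarith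
  have K_le: "real K \<le> 18 * a\<^sup>2 * b" unfolding K_def using \<open>1 \<le> a\<close> \<open>1 \<le> b\<close> by simp
  have "(2 * m + 1) ^ K \<le> 2 ^ ((2 * m + 1) * K)"
    unfolding power_mult by (intro power_mono less_imp_le[OF less_exp]) simp
  hence "real ((2 * m + 1) ^ K) \<le> 2 ^ ((2 * m + 1) * K)"
    by (metis of_nat_le_iff of_nat_numeral of_nat_power)
  also have "\<dots> = 2 powr real ((2 * m + 1) * K)" by (rule powr_realpow[symmetric]) simp
  also have "real ((2 * m + 1) * K) = (2 * real m + 1) * real K" by (simp add: algebra_simps)
  also have "\<dots> \<le> (111 * a ^ 3 * b) * (18 * a\<^sup>2 * b)"
    using m_le K_le ab by (intro mult_mono; linarith)
  also have "\<dots> = 1998 * a ^ 5 * b ^ 2" by (simp add: power2_eq_square power3_eq_cube numeral_eq_Suc)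
  finally show ?thesis unfolding eq a_def b_def by simp
qed

lemma poly2_monomial:
  assumes "p \<le> d" "q \<le> d"
  shows "poly2 (\<lambda>i j. if i = p \<and> j = q then C else 0) d a b = C * a ^ p * b ^ q"
proof -
  have "(\<Sum>j\<le>d. (if i = p \<and> j = q then C else 0) * a ^ i * b ^ j) =
          (if i = p then C * a ^ p * b ^ q else 0)" for i
    using assms(2) by (cases "i = p") (simp_all add: if_distrib[of "\<lambda>x. x * _"] sum.delta cong: if_cong)
  thus ?thesis using assms(1) by (simp add: poly2_def sum.delta)
qed

theorem lemma5p5:
  "\<exists>(c :: nat \<Rightarrow> nat \<Rightarrow> real) (d :: nat).
     \<forall>(\<epsilon>::real) (\<eta>::real) (V :: nat set) (F :: nat set set).
       0 < \<epsilon> \<and> \<epsilon> \<le> 1 \<and> 0 < \<eta> \<and> \<eta> \<le> 1 \<and>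
       finite V \<and> F \<subseteq> Pow V \<and> F \<noteq> {} \<longrightarrow>
       (\<exists>P. is_clustering V F \<epsilon> \<eta> P \<and>
            real (card P) \<le> 2 powr (poly2 c d (1/\<epsilon>) (1/\<eta>)))"
proof (rule exI[where x = "\<lambda>i j. if i = 5 \<and> j = 2 then 1998 else 0"], rule exI[where x = 5],
       intro allI impI)
  fix \<epsilon> \<eta> :: real and V :: "nat set" and F :: "nat set set"
  assume "0 < \<epsilon> \<and> \<epsilon> \<le> 1 \<and> 0 < \<eta> \<and> \<eta> \<le> 1 \<and> finite V \<and> F \<subseteq> Pow V \<and> F \<noteq> {}"
  then obtain P where "is_clustering V F \<epsilon> \<eta> P"
    and "real (card P) \<le> 2 powr (1998 * (1 / \<epsilon>) ^ 5 * (1 / \<eta>) ^ 2)"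
    using exists_clustering_card_le[of \<epsilon> \<eta> V F] clustering_size_le_powr[of \<epsilon> \<eta>]
    by (meson of_nat_le_iff order.trans)
  thus "\<exists>P. is_clustering V F \<epsilon> \<eta> P \<and>
          real (card P) \<le> 2 powr poly2 (\<lambda>i j. if i = 5 \<and> j = 2 then 1998 else 0) 5 (1/\<epsilon>) (1/\<eta>)"
    by (subst poly2_monomial) auto
qed

end
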